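(* Let $X$ be a geodesic metric space which is a $(\tau,\eta)$-tight network with respect to a collection $\mathcal L$ of subsets. For every $M\ge0$ there exists $R=R(M)$ such that for every $L,L'\in\mathcal L$ with $\mathcal N_M(L)\cap\mathcal N_M(L')\neq\emptyset$ and any point $a\in\mathcal N_M(L)\cap\mathcal N_M(L')$, there exists a sequence $L_1=L,L_2,\dots,L_n=L'$ with $L_i\in\mathcal L$ and $n\le R$ such that for all $1\le i<n$, $\mathcal N_\tau(L_i)\cap\mathcal N_\tau(L_{i+1})$ has infinite diameter, is $\eta$-path connected, and intersects $B(a,R)$.
   Context: $\mathcal N_R(A)=\{z:\mathrm{dist}(z,A)<R\}$, $B(a,R)$ open ball. A $(\lambda,\kappa)$-quasi-geodesic satisfies $\frac1\lambda|s-t|-\kappa\le\mathrm{dist}(q(s),q(t))\le\lambda|s-t|+\kappa$. A subset $A$ is $(\tau,\eta)$-quasi-convex if any two of its points are joined by an $(\eta,\eta)$-quasi-geodesic in $\mathcal N_\tau(A)$, and $\eta$-path connected if any two of its points are joined by a path in $\mathcal N_\eta(A)$. $X$ is a $(\tau,\eta)$-tight network with respect to $\mathcal L$ if each $L\in\mathcal L$ (induced metric) is $(\tau,\eta)$-quasi-convex, $X=\bigcup_{L\in\mathcal L}\mathcal N_\tau(L)$, and for any $L,L'\in\mathcal L$ and any point $z$ such that $B(z,3\tau)$ meets both $L$ and $L'$, there is a sequence $L=L_1,\dots,L_k=L'$ in $\mathcal L$, $k\le\eta$, with each $\mathcal N_\tau(L_i)\cap\mathcal N_\tau(L_{i+1})$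 of infinite diameter, $\eta$-path connected and meeting $B(z,\eta)$. *)

theory Defs
  imports "HOL-Analysis.Analysis"
begin

text \<open>Open R-neighbourhood of a set: points at distance < R from some point of A
  (so the neighbourhood of the empty set is empty, matching dist(z,{}) = infinity).\<close>
definition nbhd :: "real \<Rightarrow> 'a::metric_space set \<Rightarrow> 'a set" where
  "nbhd R A = {z. \<exists>a\<in>A. dist z a < R}"

definition geodesic_space :: "'a::metric_space itself \<Rightarrow> bool" where
  "geodesic_space _ \<longleftrightarrow> (\<forall>x y::'a. \<exists>g::real \<Rightarrow> 'a. g 0 = x \<and> g (dist x y) = y \<and>
      (\<forall>s\<in>{0..dist x y}. \<forall>t\<in>{0..dist x y}. dist (g s) (g t) = \<bar>s - t\<bar>))"

definition quasi_geodesic :: "real \<Rightarrow> real \<Rightarrow> (real \<Rightarrow> 'a::metric_space) \<Rightarrow> real \<Rightarrow> real \<Rightarrow> bool" where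
  "quasi_geodesic lam kap q a b \<longleftrightarrow> (\<forall>s\<in>{a..b}. \<forall>t\<in>{a..b}.
      \<bar>s - t\<bar> / lam - kap \<le> dist (q s) (q t) \<and> dist (q s) (q t) \<le> lam * \<bar>s - t\<bar> + kap)"

definition quasi_convex :: "real \<Rightarrow> real \<Rightarrow> 'a::metric_space set \<Rightarrow> bool" where
  "quasi_convex tau eta A \<longleftrightarrow> (\<forall>x\<in>A. \<forall>y\<in>A. \<exists>q a b. a \<le> b \<and> q a = x \<and> q b = y \<and>
      quasi_geodesic eta eta q a b \<and> q ` {a..b} \<subseteq> nbhd tau A)"

definition path_connected_nbhd :: "real \<Rightarrow> 'a::metric_space set \<Rightarrow> bool" where
  "path_connected_nbhd eta A \<longleftrightarrow> (\<forall>x\<in>A. \<forall>y\<in>A. \<exists>g. path g \<and> pathstart g = x \<and>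
      pathfinish g = y \<and> path_image g \<subseteq> nbhd eta A)"

definition infinite_diameter :: "'a::metric_space set \<Rightarrow> bool" where
  "infinite_diameter S \<longleftrightarrow> \<not> bounded S"

definition good_chain :: "real \<Rightarrow> real \<Rightarrow> 'a::metric_space set set \<Rightarrow> 'a set \<Rightarrow>
    (nat \<Rightarrow> 'a set) \<Rightarrow> nat \<Rightarrow> bool" where
  "good_chain tau eta \<L> B Ls k \<longleftrightarrow> k \<ge> 1 \<and> (\<forall>i\<in>{1..k}. Ls i \<in> \<L>) \<and>
     (\<forall>i\<in>{1..<k}. infinite_diameter (nbhd tau (Ls i) \<inter> nbhd tau (Ls (Suc i))) \<and>
        path_connected_nbhd eta (nbhd tau (Ls i) \<inter> nbhd tau (Ls (Suc i))) \<and>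
        nbhd tau (Ls i) \<inter> nbhd tau (Ls (Suc i)) \<inter> B \<noteq> {})"

definition tight_network :: "real \<Rightarrow> real \<Rightarrow> 'a::metric_space set set \<Rightarrow> bool" where
  "tight_network tau eta \<L> \<longleftrightarrow>
     (\<forall>L\<in>\<L>. quasi_convex tau eta L) \<and>
     UNIV = (\<Union>L\<in>\<L>. nbhd tau L) \<and>
     (\<forall>L\<in>\<L>. \<forall>L'\<in>\<L>. \<forall>z. ball z (3*tau) \<inter> L \<noteq> {} \<and> ball z (3*tau) \<inter> L' \<noteq> {} \<longrightarrow>
        (\<exists>Ls k. Ls 1 = L \<and> Ls k = L' \<and> real k \<le> eta \<and> good_chain tau eta \<L> (ball z eta) Ls k))"

end

theory Submission
  imports Defs
begin

text \<open>Take p \<in> L and p' \<in> L' within M of a, so d(p, p') < 2M, and subdivide a geodesic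
  from p to p' into at most 2M/tau + 1 steps of length at most tau. Every subdivision point is
  tau-close to some member of the family, and the members chosen at consecutive points both meet
  the 3tau-ball around the earlier point, so tightness joins them by a chain of at most eta
  members whose consecutive intersections meet the eta-ball around that point. Concatenating
  these chains gives a chain of length O(eta M / tau) all of whose intersections meet
  B(a, 3M + eta).\<close>

definition chain_linked :: "real \<Rightarrow> real \<Rightarrow> 'a::metric_space set set \<Rightarrow> 'a set \<Rightarrow>
    'a set \<Rightarrow> 'a set \<Rightarrow> real \<Rightarrow> bool" where
  "chain_linked tau eta \<L> B L L' c \<longleftrightarrow>
     (\<exists>Ls n. Ls 1 = L \<and> Ls n = L' \<and> real n \<le> c \<and> good_chain tau eta \<L> B Ls n)"

lemma chain_linked_refl:
  assumes "L \<in> \<L>" "c \<ge> 1"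
  shows "chain_linked tau eta \<L> B L L c"
  unfolding chain_linked_def good_chain_def using assms
  by (intro exI[of _ "\<lambda>_. L"] exI[of _ 1]) simp

lemma chain_linked_mono:
  assumes "chain_linked tau eta \<L> B L L' c" "B \<subseteq> B'" "c \<le> c'"
  shows "chain_linked tau eta \<L> B' L L' c'"
proof -
  obtain Ls n where "Ls 1 = L" "Ls n = L'" "real n \<le> c" "good_chain tau eta \<L> B Ls n"
    using assms(1) unfolding chain_linked_def by blast
  moreover have "good_chain tau eta \<L> B' Ls n"
    using calculation(4) assms(2) unfolding good_chain_def by blast
  ultimately show ?thesis using assms(3) unfolding chain_linked_def by fastforce
qed

lemma good_chain_append:
  assumes A: "good_chain tau eta \<L> B Ls k" and M: "good_chain tau eta \<L> B Ms m"
    and join: "Ls k = Ms 1"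
  shows "\<exists>Cs. Cs 1 = Ls 1 \<and> Cs (k + m - 1) = Ms m \<and> good_chain tau eta \<L> B Cs (k + m - 1)"
proof -
  define C where "C i = (if i \<le> k then Ls i else Ms (i + 1 - k))" for i
  define Q where "Q X Y \<longleftrightarrow> infinite_diameter (nbhd tau X \<inter> nbhd tau Y) \<and>
      path_connected_nbhd eta (nbhd tau X \<inter> nbhd tau Y) \<and> nbhd tau X \<inter> nbhd tau Y \<inter> B \<noteq> {}"
    for X Y
  have gc: "good_chain tau eta \<L> B Ns j \<longleftrightarrow> j \<ge> 1 \<and> (\<forall>i\<in>{1..j}. Ns i \<in> \<L>) \<and>
      (\<forall>i\<in>{1..<j}. Q (Ns i) (Ns (Suc i)))" for Ns j
    unfolding good_chain_def Q_def by blast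
  from A have k1: "k \<ge> 1" and LF: "\<And>i. i \<in> {1..k} \<Longrightarrow> Ls i \<in> \<L>"
    and LQ: "\<And>i. i \<in> {1..<k} \<Longrightarrow> Q (Ls i) (Ls (Suc i))" unfolding gc by auto
  from M have m1: "m \<ge> 1" and MF: "\<And>i. i \<in> {1..m} \<Longrightarrow> Ms i \<in> \<L>"
    and MQ: "\<And>i. i \<in> {1..<m} \<Longrightarrow> Q (Ms i) (Ms (Suc i))" unfolding gc by auto
  have "good_chain tau eta \<L> B C (k + m - 1)"
    unfolding gc
  proof (intro conjI ballI)
    fix i assume i: "i \<in> {1..k + m - 1}"
    show "C i \<in> \<L>"
    proof (cases "i \<le> k")
      case False
      then have "i + 1 - k \<in> {1..m}" using i by auto
      then show ?thesis using False MF by (simp add: C_def)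
    qed (use i LF in \<open>simp add: C_def\<close>)
  next
    fix i assume i: "i \<in> {1..<k + m - 1}"
    consider "i < k" | "i \<ge> k" by linarith
    then show "Q (C i) (C (Suc i))"
    proof cases
      case 1
      then show ?thesis using i LQ by (simp add: C_def)
    next
      case 2
      have "i + 1 - k \<in> {1..<m}" "Suc i + 1 - k = Suc (i + 1 - k)" using i 2 by auto
      moreover have "C i = Ms (i + 1 - k)" using 2 join by (simp add: C_def)
      ultimately show ?thesis using MQ 2 by (simp add: C_def)
    qed
  qed (use k1 m1 in simp)
  moreover have "C 1 = Ls 1" using k1 by (simp add: C_def)
  moreover have "C (k + m - 1) = Ms m"
  proof (cases "m = 1")
    case False
    then have "\<not> k + m - 1 \<le> k" "k + m - 1 + 1 - k = m" using k1 m1 by auto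
    then show ?thesis by (simp add: C_def)
  qed (use join in \<open>simp add: C_def\<close>)
  ultimately show ?thesis by blast
qed

lemma chain_linked_trans:
  assumes "chain_linked tau eta \<L> B L1 L2 c" "chain_linked tau eta \<L> B L2 L3 c'"
  shows "chain_linked tau eta \<L> B L1 L3 (c + c' - 1)"
proof -
  obtain Ls k where L: "Ls 1 = L1" "Ls k = L2" "real k \<le> c" "good_chain tau eta \<L> B Ls k"
    using assms(1) unfolding chain_linked_def by blast
  obtain Ms m where M: "Ms 1 = L2" "Ms m = L3" "real m \<le> c'" "good_chain tau eta \<L> B Ms m"
    using assms(2) unfolding chain_linked_def by blast
  have "k \<ge> 1" "m \<ge> 1" using L(4) M(4) unfolding good_chain_def by auto
  then have "real (k + m - 1) \<le> c + c' - 1" using L(3) M(3) by linarith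
  moreover obtain Cs where "Cs 1 = L1" "Cs (k + m - 1) = L3"
    "good_chain tau eta \<L> B Cs (k + m - 1)"
    using good_chain_append[OF L(4) M(4) trans[OF L(2) M(1)[symmetric]]] L(1) M(2) by auto
  ultimately show ?thesis unfolding chain_linked_def by blast
qed

lemma chain_linked_along:
  assumes "Ls 0 \<in> \<L>" "\<And>i. i < N \<Longrightarrow> chain_linked tau eta \<L> B (Ls i) (Ls (Suc i)) c"
    and "c \<ge> 1"
  shows "chain_linked tau eta \<L> B (Ls 0) (Ls N) (1 + real N * (c - 1))"
  using assms(2)
proof (induction N)
  case 0
  show ?case using chain_linked_refl[OF assms(1)] by simp
next
  case (Suc N)
  then have "chain_linked tau eta \<L> B (Ls 0) (Ls (Suc N)) ((1 + real N * (c - 1)) + c - 1)"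
    by (intro chain_linked_trans) auto
  then show ?case by (simp add: algebra_simps)
qed

lemma subset_nbhd: "r > 0 \<Longrightarrow> A \<subseteq> nbhd r A"
  unfolding nbhd_def by force

lemma tight_network_cover:
  "tight_network tau eta \<L> \<Longrightarrow> \<exists>L\<in>\<L>. x \<in> nbhd tau L"
  unfolding tight_network_def by blast

lemma tight_network_tau_pos:
  assumes "tight_network tau eta \<L>"
  shows "tau > 0"
proof -
  obtain L y where "L \<in> \<L>" "y \<in> L" "dist (undefined::'a) y < tau"
    using tight_network_cover[OF assms, of undefined] unfolding nbhd_def by blast
  then show ?thesis using zero_le_dist[of "undefined::'a" y] by linarith
qed

lemma tight_network_link:
  assumes net: "tight_network tau eta \<L>" and "L1 \<in> \<L>" "L2 \<in> \<L>"
    and "x \<in> nbhd tau L1" "y \<in> nbhd tau L2" "dist x y < 2 * tau"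
  shows "chain_linked tau eta \<L> (ball x eta) L1 L2 eta"
proof -
  obtain q1 q2 where "q1 \<in> L1" "dist x q1 < tau" "q2 \<in> L2" "dist y q2 < tau"
    using assms(4,5) unfolding nbhd_def by blast
  moreover have "dist x q2 \<le> dist x y + dist y q2" by (rule dist_triangle)
  ultimately have "q1 \<in> ball x (3 * tau) \<inter> L1" "q2 \<in> ball x (3 * tau) \<inter> L2"
    using assms(6) tight_network_tau_pos[OF net] by auto
  then show ?thesis
    using net assms(2,3) unfolding tight_network_def chain_linked_def by blast
qed

lemma tight_network_eta_ge_1:
  assumes net: "tight_network tau eta \<L>"
  shows "eta \<ge> 1"
proof -
  obtain L x where L: "L \<in> \<L>" "x \<in> nbhd tau L"
    using tight_network_cover[OF net] by blast
  obtain Ls n where "real n \<le> eta" "good_chain tau eta \<L> (ball x eta) Ls n"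
    using tight_network_link[OF net L(1) L(1) L(2) L(2)] tight_network_tau_pos[OF net]
    unfolding chain_linked_def by auto
  then show ?thesis unfolding good_chain_def by linarith
qed

lemma tight_network_chain_along_points:
  assumes net: "tight_network tau eta \<L>"
    and step: "\<And>i. i < N \<Longrightarrow> dist (z i) (z (Suc i)) < 2 * tau"
    and Ls: "\<And>i. i \<le> N \<Longrightarrow> Ls i \<in> \<L> \<and> z i \<in> nbhd tau (Ls i)"
    and B: "\<And>i. i \<le> N \<Longrightarrow> ball (z i) eta \<subseteq> B"
  shows "chain_linked tau eta \<L> B (Ls 0) (Ls N) (1 + real N * (eta - 1))"
proof (rule chain_linked_along)
  fix i assume i: "i < N"
  have "chain_linked tau eta \<L> (ball (z i) eta) (Ls i) (Ls (Suc i)) eta"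
    using step[OF i] Ls[of i] Ls[of "Suc i"] i by (intro tight_network_link[OF net]) auto
  then show "chain_linked tau eta \<L> B (Ls i) (Ls (Suc i)) eta"
    using B[of i] i by (elim chain_linked_mono) auto
qed (use Ls tight_network_eta_ge_1[OF net] in auto)

lemma geodesic_subdivision:
  fixes p p' :: "'a::metric_space"
  assumes "geodesic_space TYPE('a)" "r > 0"
  obtains N z where "N \<ge> 1" "real N \<le> dist p p' / r + 1" "z 0 = p" "z N = p'"
    "\<And>i. i < N \<Longrightarrow> dist (z i) (z (Suc i)) \<le> r"
    "\<And>i. i \<le> N \<Longrightarrow> dist p (z i) \<le> dist p p'"
proof -
  define d where "d = dist p p'"
  obtain g :: "real \<Rightarrow> 'a" where g0: "g 0 = p" and gd: "g d = p'"
    and g: "\<And>s t. s \<in> {0..d} \<Longrightarrow> t \<in> {0..d} \<Longrightarrow> dist (g s) (g t) = \<bar>s - t\<bar>"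
    using assms(1) unfolding geodesic_space_def d_def by blast
  have d0: "d \<ge> 0" unfolding d_def by simp
  define q where "q = d / r"
  have q0: "q \<ge> 0" using d0 assms(2) by (simp add: q_def)
  define N where "N = max 1 (nat \<lceil>q\<rceil>)"
  have N1: "N \<ge> 1" unfolding N_def by simp
  have Nq: "q \<le> real N" "real N \<le> q + 1"
    using ceiling_correct[of q] q0 unfolding N_def of_nat_max by (simp_all add: max_def)
  have dN: "d / real N \<le> r"
    using Nq(1) N1 assms(2) by (simp add: q_def field_simps)
  define t where "t i = d * real i / real N" for i
  have t: "i \<le> N \<Longrightarrow> t i \<in> {0..d}" for i
    using d0 N1 by (auto simp: t_def field_simps intro: mult_left_mono)
  define z where "z i = g (t i)" for i
  show thesis
  proof
    show "z 0 = p" "z N = p'" using g0 gd N1 by (simp_all add: z_def t_def)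
    show "dist (z i) (z (Suc i)) \<le> r" if "i < N" for i
    proof -
      have "t (Suc i) - t i = d / real N" by (simp add: t_def add_divide_distrib algebra_simps)
      moreover have "d / real N \<ge> 0" using d0 by simp
      ultimately have "dist (z i) (z (Suc i)) = d / real N"
        using g[OF t t, of i "Suc i"] that by (simp add: z_def abs_minus_commute)
      with dN show ?thesis by simp
    qed
    show "dist p (z i) \<le> dist p p'" if "i \<le> N" for i
      using g[of 0 "t i"] t[OF that] g0 d0 by (simp add: z_def d_def)
  qed (use N1 Nq(2) q_def d_def in auto)
qed

lemma tight_network_chain_linked_between_points:
  fixes p p' :: "'a::metric_space"
  assumes geo: "geodesic_space TYPE('a)" and net: "tight_network tau eta \<L>"
    and L: "L \<in> \<L>" "L' \<in> \<L>" and p: "p \<in> nbhd tau L" "p' \<in> nbhd tau L'"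
  shows "chain_linked tau eta \<L> (ball p (dist p p' + eta)) L L' (1 + (dist p p' / tau + 1) * (eta - 1))"
proof -
  have tau: "tau > 0" and eta: "eta \<ge> 1"
    using tight_network_tau_pos tight_network_eta_ge_1 net by blast+
  obtain N z where N: "N \<ge> 1" "real N \<le> dist p p' / tau + 1" "z 0 = p" "z N = p'"
    and step: "\<And>i. i < N \<Longrightarrow> dist (z i) (z (Suc i)) \<le> tau"
    and near: "\<And>i. i \<le> N \<Longrightarrow> dist p (z i) \<le> dist p p'"
    by (rule geodesic_subdivision[OF geo tau, where p = p and p' = p']) blast
  obtain Ls where Ls: "\<forall>i. Ls i \<in> \<L> \<and> z i \<in> nbhd tau (Ls i)"
    using choice[of "\<lambda>i L. L \<in> \<L> \<and> z i \<in> nbhd tau L"] tight_network_cover[OF net] by blast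
  define Ks where "Ks = Ls(0 := L, N := L')"
  have Ks: "Ks i \<in> \<L> \<and> z i \<in> nbhd tau (Ks i)" for i
    using Ls L p N(1,3,4) by (auto simp: Ks_def)
  have "ball (z i) eta \<subseteq> ball p (dist p p' + eta)" if "i \<le> N" for i
  proof
    fix y assume "y \<in> ball (z i) eta"
    then show "y \<in> ball p (dist p p' + eta)"
      using near[OF that] dist_triangle[of p y "z i"] by simp
  qed
  then have "chain_linked tau eta \<L> (ball p (dist p p' + eta)) (Ks 0) (Ks N) (1 + real N * (eta - 1))"
    using step tau by (intro tight_network_chain_along_points[OF net _ Ks]) force+
  moreover have "Ks 0 = L" "Ks N = L'" using N(1) by (auto simp: Ks_def)
  moreover have "1 + real N * (eta - 1) \<le> 1 + (dist p p' / tau + 1) * (eta - 1)"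
    using N(2) eta by (simp add: mult_right_mono)
  ultimately show ?thesis by (metis chain_linked_mono order_refl)
qed

lemma tight_network_chain_linked_near_point:
  fixes \<L> :: "'a::metric_space set set"
  assumes geo: "geodesic_space TYPE('a)" and net: "tight_network tau eta \<L>"
    and "M \<ge> 0" and L: "L \<in> \<L>" "L' \<in> \<L>" and a: "a \<in> nbhd M L \<inter> nbhd M L'"
  defines "R \<equiv> 3 * M + (2 * M / tau + 1) * eta"
  shows "chain_linked tau eta \<L> (ball a R) L L' R"
proof -
  have tau: "tau > 0" and eta: "eta \<ge> 1"
    using tight_network_tau_pos tight_network_eta_ge_1 net by blast+
  obtain p p' where p: "p \<in> L" "dist a p < M" "p' \<in> L'" "dist a p' < M"
    using a unfolding nbhd_def by blast
  have pp': "dist p p' < 2 * M"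
    using p dist_triangle2[of p p' a] by (simp add: dist_commute)
  have "0 \<le> 2 * M / tau * eta" using \<open>M \<ge> 0\<close> tau eta by simp
  then have "3 * M + eta \<le> R" unfolding R_def by (simp add: distrib_right)
  have ball: "ball p (dist p p' + eta) \<subseteq> ball a R"
  proof
    fix y assume "y \<in> ball p (dist p p' + eta)"
    then show "y \<in> ball a R"
      using \<open>3 * M + eta \<le> R\<close> p(2) pp' dist_triangle[of a y p] by simp
  qed
  have length: "1 + (dist p p' / tau + 1) * (eta - 1) \<le> R"
  proof -
    have "dist p p' / tau \<le> 2 * M / tau" using pp' tau by (simp add: divide_right_mono)
    then have "1 + (dist p p' / tau + 1) * (eta - 1) \<le> 1 + (2 * M / tau + 1) * (eta - 1)"
      using eta by (intro add_left_mono mult_right_mono) auto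
    also have "\<dots> = (2 * M / tau + 1) * eta - 2 * M / tau" by argo
    also have "\<dots> \<le> R"
      using \<open>M \<ge> 0\<close> tau divide_nonneg_pos[of "2 * M" tau] unfolding R_def by linarith
    finally show ?thesis .
  qed
  have "p \<in> nbhd tau L" "p' \<in> nbhd tau L'"
    using p(1,3) subset_nbhd[OF tau] by blast+
  from tight_network_chain_linked_between_points[OF geo net L this] ball length
  show ?thesis by (rule chain_linked_mono)
qed

theorem corollary4p7:
  fixes \<L> :: "'a::metric_space set set" and tau eta :: real
  assumes "geodesic_space TYPE('a)"
    and "tight_network tau eta \<L>"
  shows "\<forall>M\<ge>0. \<exists>R. \<forall>L\<in>\<L>. \<forall>L'\<in>\<L>. \<forall>a\<in>nbhd M L \<inter> nbhd M L'.
           \<exists>Ls n. Ls 1 = L \<and> Ls n = L' \<and> real n \<le> R \<and> good_chain tau eta \<L> (ball a R) Ls n"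
  using tight_network_chain_linked_near_point[OF assms] unfolding chain_linked_def by blast

end
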